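(* Let $p$ be a prime and let $f,f'\in\mathcal{R}$. If $f$ is oblivious to $p$ and $f'$ has a transducer with fewer than $p$ states, then $f'f$ is oblivious to $p$.
   Context: An asynchronous binary transducer is $(S,s_0,t,o)$ with $S$ finite, $s_0\in S$, $t\colon S\times\{0,1\}\to S$, $o\colon S\times\{0,1\}\to\{0,1\}^*$; $t$ and $o$ extend to words: for $s\in S$ and $\sigma_1\sigma_2\cdots$ let $s_1=s$, $s_{n+1}=t(s_n,\sigma_n)$, $t(s,\sigma_1\cdots\sigma_n)=s_{n+1}$, $o(s,\sigma_1\sigma_2\cdots)=o(s_1,\sigma_1)o(s_2,\sigma_2)\cdots$. It is a transducer for a homeomorphism $f$ of $\{0,1\}^\omega$ if $f(\psi)=o(s_0,\psi)$ for all $\psi$; $\mathcal{R}$ is the group of homeomorphisms having a transducer. A state $s$ is accessible if $s=t(s_0,\alpha)$ for some finite word $\alpha$. A cycle is a pair $(c,\gamma)$ with $c\in S$ and $\gamma$ a nonempty finite word with $t(c,\gamma)=c$; its length is $|\gamma|$; it is accessible if $c$ is. A transducer is oblivious to $p$ if it has an accessible cycle whose length is not a multiple of $p$; an element of $\mathcal{R}$ is oblivious to $p$ if some transducer for it is. $f'f$ denotes the composition ($f$ first, then $f'$). *)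

theory Defs
  imports "HOL-Analysis.Analysis"
begin

text \<open>Infinite binary words are elements of type nat => bool (the Cantor space
{0,1}^omega, with the product topology of the discrete space bool); finite words
are bool lists.\<close>

type_synonym transducer =
  "nat set \<times> nat \<times> (nat \<Rightarrow> bool \<Rightarrow> nat) \<times> (nat \<Rightarrow> bool \<Rightarrow> bool list)"

definition states :: "transducer \<Rightarrow> nat set" where
  "states T = fst T"
definition init :: "transducer \<Rightarrow> nat" where
  "init T = fst (snd T)"
definition trans :: "transducer \<Rightarrow> nat \<Rightarrow> bool \<Rightarrow> nat" where
  "trans T = fst (snd (snd T))"
definition outp :: "transducer \<Rightarrow> nat \<Rightarrow> bool \<Rightarrow> bool list" where
  "outp T = snd (snd (snd T))"

definition wf_transducer :: "transducer \<Rightarrow> bool" where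
  "wf_transducer T \<longleftrightarrow> finite (states T) \<and> init T \<in> states T \<and>
     (\<forall>s\<in>states T. \<forall>a. trans T s a \<in> states T)"

fun trans_word :: "transducer \<Rightarrow> nat \<Rightarrow> bool list \<Rightarrow> nat" where
  "trans_word T s [] = s"
| "trans_word T s (a # w) = trans_word T (trans T s a) w"

text \<open>State s_{n+1} reached after reading the first n letters of an infinite word.\<close>
definition run_state :: "transducer \<Rightarrow> nat \<Rightarrow> (nat \<Rightarrow> bool) \<Rightarrow> nat \<Rightarrow> nat" where
  "run_state T s \<psi> n = trans_word T s (map \<psi> [0..<n])"

definition out_prefix :: "transducer \<Rightarrow> nat \<Rightarrow> (nat \<Rightarrow> bool) \<Rightarrow> nat \<Rightarrow> bool list" where
  "out_prefix T s \<psi> n = concat (map (\<lambda>i. outp T (run_state T s \<psi> i) (\<psi> i)) [0..<n])"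

definition is_prefix_of :: "bool list \<Rightarrow> (nat \<Rightarrow> bool) \<Rightarrow> bool" where
  "is_prefix_of w x \<longleftrightarrow> (\<forall>i<length w. w ! i = x i)"

text \<open>The infinite concatenation o(s, psi) equals the infinite word x.\<close>
definition output_is :: "transducer \<Rightarrow> nat \<Rightarrow> (nat \<Rightarrow> bool) \<Rightarrow> (nat \<Rightarrow> bool) \<Rightarrow> bool" where
  "output_is T s \<psi> x \<longleftrightarrow>
     (\<forall>n. is_prefix_of (out_prefix T s \<psi> n) x) \<and>
     (\<forall>m. \<exists>n. m \<le> length (out_prefix T s \<psi> n))"

definition homeo_cantor :: "((nat \<Rightarrow> bool) \<Rightarrow> (nat \<Rightarrow> bool)) \<Rightarrow> bool" where
  "homeo_cantor f \<longleftrightarrow> (\<exists>g. homeomorphism UNIV UNIV f g)"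

definition transducer_for :: "transducer \<Rightarrow> ((nat \<Rightarrow> bool) \<Rightarrow> (nat \<Rightarrow> bool)) \<Rightarrow> bool" where
  "transducer_for T f \<longleftrightarrow> wf_transducer T \<and> homeo_cantor f \<and>
     (\<forall>\<psi>. output_is T (init T) \<psi> (f \<psi>))"

definition RR :: "((nat \<Rightarrow> bool) \<Rightarrow> (nat \<Rightarrow> bool)) set" where
  "RR = {f. homeo_cantor f \<and> (\<exists>T. transducer_for T f)}"

definition accessible :: "transducer \<Rightarrow> nat \<Rightarrow> bool" where
  "accessible T s \<longleftrightarrow> (\<exists>\<alpha>. s = trans_word T (init T) \<alpha>)"

definition is_cycle :: "transducer \<Rightarrow> nat \<Rightarrow> bool list \<Rightarrow> bool" where
  "is_cycle T c \<gamma> \<longleftrightarrow> c \<in> states T \<and> \<gamma> \<noteq> [] \<and> trans_word T c \<gamma> = c"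

definition oblivious_transducer :: "nat \<Rightarrow> transducer \<Rightarrow> bool" where
  "oblivious_transducer p T \<longleftrightarrow>
     (\<exists>c \<gamma>. is_cycle T c \<gamma> \<and> accessible T c \<and> \<not> p dvd length \<gamma>)"

definition oblivious :: "nat \<Rightarrow> ((nat \<Rightarrow> bool) \<Rightarrow> (nat \<Rightarrow> bool)) \<Rightarrow> bool" where
  "oblivious p f \<longleftrightarrow> (\<exists>T. transducer_for T f \<and> oblivious_transducer p T)"

end

theory Submission
  imports Defs "HOL-Library.Nat_Bijection"
begin

text \<open>Run the composite transducer of T followed by T' on an accessible cycle (c, \<gamma>) of T.
  Going once around \<gamma> acts on the T'-component by a self-map g of the states of T'; since
  T' has fewer than p states, some power g^d with 0 < d < p has a fixed point in the forward
  orbit of the T'-state reached along an access path to c. Then \<gamma> repeated d times is an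
  accessible cycle of the composite, of length d |\<gamma>|, which p does not divide because p is prime.\<close>

fun out_word :: "transducer \<Rightarrow> nat \<Rightarrow> bool list \<Rightarrow> bool list" where
  "out_word T s [] = []"
| "out_word T s (a # w) = outp T s a @ out_word T (trans T s a) w"

lemma trans_word_append: "trans_word T s (u @ v) = trans_word T (trans_word T s u) v"
  by (induct u arbitrary: s) auto

lemma out_word_append: "out_word T s (u @ v) = out_word T s u @ out_word T (trans_word T s u) v"
  by (induct u arbitrary: s) auto

lemma trans_word_in_states:
  "wf_transducer T \<Longrightarrow> s \<in> states T \<Longrightarrow> trans_word T s u \<in> states T"
  by (induct u arbitrary: s) (auto simp: wf_transducer_def)

lemma out_prefix_Suc:
  "out_prefix T s \<psi> (Suc n) = out_prefix T s \<psi> n @ outp T (run_state T s \<psi> n) (\<psi> n)"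
  by (simp add: out_prefix_def)

lemma out_prefix_eq_out_word: "out_prefix T s \<psi> n = out_word T s (map \<psi> [0..<n])"
  by (induct n) (auto simp: out_prefix_Suc out_word_append run_state_def out_prefix_def[of _ _ _ 0])

lemma length_out_prefix_mono:
  "k \<le> n \<Longrightarrow> length (out_prefix T s \<psi> k) \<le> length (out_prefix T s \<psi> n)"
  by (induct n rule: dec_induct) (simp_all add: out_prefix_Suc)

lemma map_eq_if_is_prefix_of: "is_prefix_of w x \<Longrightarrow> map x [0..<length w] = w"
  by (auto simp: is_prefix_of_def intro: nth_equalityI)

text \<open>States are natural numbers, so a pair of states is stored via prod_encode.\<close>
definition transducer_comp :: "transducer \<Rightarrow> transducer \<Rightarrow> transducer" where
  "transducer_comp T T' = (prod_encode ` (states T \<times> states T'),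
     prod_encode (init T, init T'),
     (\<lambda>x a. case prod_decode x of (s, s') \<Rightarrow>
        prod_encode (trans T s a, trans_word T' s' (outp T s a))),
     (\<lambda>x a. case prod_decode x of (s, s') \<Rightarrow> out_word T' s' (outp T s a)))"

lemma states_transducer_comp:
  "states (transducer_comp T T') = prod_encode ` (states T \<times> states T')"
  by (simp add: transducer_comp_def states_def)

lemma init_transducer_comp: "init (transducer_comp T T') = prod_encode (init T, init T')"
  by (simp add: transducer_comp_def init_def)

lemma trans_transducer_comp:
  "trans (transducer_comp T T') (prod_encode (s, s')) a =
     prod_encode (trans T s a, trans_word T' s' (outp T s a))"
  by (simp add: transducer_comp_def trans_def)

lemma outp_transducer_comp:
  "outp (transducer_comp T T') (prod_encode (s, s')) a = out_word T' s' (outp T s a)"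
  by (simp add: transducer_comp_def outp_def)

lemma trans_word_transducer_comp:
  "trans_word (transducer_comp T T') (prod_encode (s, s')) u =
     prod_encode (trans_word T s u, trans_word T' s' (out_word T s u))"
  by (induct u arbitrary: s s') (auto simp: trans_transducer_comp trans_word_append)

lemma out_word_transducer_comp:
  "out_word (transducer_comp T T') (prod_encode (s, s')) u = out_word T' s' (out_word T s u)"
  by (induct u arbitrary: s s') (auto simp: outp_transducer_comp trans_transducer_comp out_word_append)

lemma wf_transducer_comp:
  assumes "wf_transducer T" "wf_transducer T'"
  shows "wf_transducer (transducer_comp T T')"
  using assms trans_word_in_states[OF assms(2)]
  by (auto simp: wf_transducer_def states_transducer_comp init_transducer_comp trans_transducer_comp)

lemma out_prefix_transducer_comp:
  assumes "output_is T s \<psi> x"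
  shows "out_prefix (transducer_comp T T') (prod_encode (s, s')) \<psi> n =
           out_prefix T' s' x (length (out_prefix T s \<psi> n))"
  using assms
  by (simp add: out_prefix_eq_out_word out_word_transducer_comp map_eq_if_is_prefix_of output_is_def)

lemma output_is_transducer_comp:
  assumes "output_is T s \<psi> x" "output_is T' s' x y"
  shows "output_is (transducer_comp T T') (prod_encode (s, s')) \<psi> y"
  unfolding output_is_def
proof (intro conjI allI)
  fix n
  show "is_prefix_of (out_prefix (transducer_comp T T') (prod_encode (s, s')) \<psi> n) y"
    using assms(2) by (simp add: out_prefix_transducer_comp[OF assms(1)] output_is_def)
next
  fix m
  obtain k where "m \<le> length (out_prefix T' s' x k)"
    using assms(2) by (auto simp: output_is_def)
  also obtain n where "k \<le> length (out_prefix T s \<psi> n)"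
    using assms(1) by (auto simp: output_is_def)
  then have "length (out_prefix T' s' x k) \<le> length (out_prefix T' s' x (length (out_prefix T s \<psi> n)))"
    by (rule length_out_prefix_mono)
  finally have "m \<le> length (out_prefix (transducer_comp T T') (prod_encode (s, s')) \<psi> n)"
    by (simp only: out_prefix_transducer_comp[OF assms(1)])
  then show "\<exists>n. m \<le> length (out_prefix (transducer_comp T T') (prod_encode (s, s')) \<psi> n)" ..
qed

lemma homeo_cantor_comp: "homeo_cantor f \<Longrightarrow> homeo_cantor f' \<Longrightarrow> homeo_cantor (f' \<circ> f)"
  unfolding homeo_cantor_def by (blast intro: homeomorphism_compose)

lemma transducer_for_comp:
  assumes "transducer_for T f" "transducer_for T' f'"
  shows "transducer_for (transducer_comp T T') (f' \<circ> f)"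
  using assms
  by (auto simp: transducer_for_def init_transducer_comp
      intro: wf_transducer_comp homeo_cantor_comp output_is_transducer_comp)

lemma funpow_returns_within_card:
  assumes "finite S" "s \<in> S" "g ` S \<subseteq> S"
  obtains i d where "0 < d" "d \<le> card S" "(g ^^ d) ((g ^^ i) s) = (g ^^ i) s"
proof -
  have orbit: "(g ^^ k) s \<in> S" for k
    by (induct k) (use assms in auto)
  have "\<not> inj_on (\<lambda>k. (g ^^ k) s) {0..card S}"
  proof
    assume "inj_on (\<lambda>k. (g ^^ k) s) {0..card S}"
    then have "card {0..card S} \<le> card S"
      using orbit assms(1) by (intro card_inj_on_le) auto
    then show False by simp
  qed
  then obtain i j where "i < j" "j \<le> card S" "(g ^^ i) s = (g ^^ j) s"
    unfolding inj_on_def by (metis atLeastAtMost_iff linorder_neqE_nat)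
  moreover have "(g ^^ (j - i)) ((g ^^ i) s) = (g ^^ j) s"
  proof -
    have "(g ^^ (j - i)) ((g ^^ i) s) = (g ^^ (j - i + i)) s"
      by (simp only: funpow_add comp_apply)
    then show ?thesis
      using \<open>i < j\<close> by simp
  qed
  ultimately show thesis
    by (intro that[of "j - i" i]) auto
qed

lemma trans_word_transducer_comp_cycle_power:
  assumes "trans_word T c \<gamma> = c"
  shows "trans_word (transducer_comp T T') (prod_encode (c, s')) (concat (replicate d \<gamma>)) =
     prod_encode (c, ((\<lambda>z. trans_word T' z (out_word T c \<gamma>)) ^^ d) s')"
proof (induct d arbitrary: s')
  case (Suc d)
  then show ?case
    using assms by (simp add: trans_word_append trans_word_transducer_comp funpow_Suc_right
                         del: funpow.simps)
qed simp

lemma oblivious_transducer_comp: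
  assumes "prime p" "oblivious_transducer p T"
    and "wf_transducer T'" "card (states T') < p"
  shows "oblivious_transducer p (transducer_comp T T')"
proof -
  obtain c \<gamma> \<alpha> where cyc: "is_cycle T c \<gamma>" and acc: "c = trans_word T (init T) \<alpha>"
    and not_dvd: "\<not> p dvd length \<gamma>"
    using assms(2) by (auto simp: oblivious_transducer_def accessible_def)
  define C where "C = transducer_comp T T'"
  define g where "g = (\<lambda>z. trans_word T' z (out_word T c \<gamma>))"
  define s where "s = trans_word T' (init T') (out_word T (init T) \<alpha>)"
  have "finite (states T')" "s \<in> states T'" "g ` states T' \<subseteq> states T'"
    using assms(3) trans_word_in_states[OF assms(3)]
    by (auto simp: s_def g_def wf_transducer_def)
  then obtain i d where d: "0 < d" "d \<le> card (states T')" and returns: "(g ^^ d) ((g ^^ i) s) = (g ^^ i) s"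
    by (rule funpow_returns_within_card)
  have round: "trans_word C (prod_encode (c, s')) (concat (replicate k \<gamma>)) = prod_encode (c, (g ^^ k) s')"
    for k s'
    using cyc unfolding C_def g_def is_cycle_def by (intro trans_word_transducer_comp_cycle_power) simp
  have "trans_word C (init C) \<alpha> = prod_encode (c, s)"
    by (simp add: C_def init_transducer_comp trans_word_transducer_comp acc[symmetric] s_def[symmetric])
  then have "trans_word C (init C) (\<alpha> @ concat (replicate i \<gamma>)) = prod_encode (c, (g ^^ i) s)"
    by (simp add: trans_word_append round)
  then have "accessible C (prod_encode (c, (g ^^ i) s))"
    unfolding accessible_def by metis
  moreover have "is_cycle C (prod_encode (c, (g ^^ i) s)) (concat (replicate d \<gamma>))"
  proof -
    have "(g ^^ i) s \<in> states T'"
      by (induct i) (use \<open>s \<in> states T'\<close> \<open>g ` states T' \<subseteq> states T'\<close> in auto)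
    then show ?thesis
      using cyc d returns round[of "(g ^^ i) s" d]
      by (auto simp: is_cycle_def C_def states_transducer_comp)
  qed
  moreover have "\<not> p dvd length (concat (replicate d \<gamma>))"
  proof -
    have "\<not> p dvd d" using d assms(4) by (auto dest: dvd_imp_le)
    then show ?thesis
      using not_dvd assms(1) by (simp add: length_concat sum_list_replicate prime_dvd_mult_iff)
  qed
  ultimately show ?thesis
    unfolding oblivious_transducer_def C_def by blast
qed

theorem lemma3p4:
  fixes p :: nat and f f' :: "(nat \<Rightarrow> bool) \<Rightarrow> (nat \<Rightarrow> bool)"
  assumes "prime p"
    and "f \<in> RR" and "f' \<in> RR"
    and "oblivious p f"
    and "\<exists>T. transducer_for T f' \<and> card (states T) < p"
  shows "oblivious p (f' \<circ> f)"
proof -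
  obtain T where T: "transducer_for T f" "oblivious_transducer p T"
    using assms(4) by (auto simp: oblivious_def)
  obtain T' where T': "transducer_for T' f'" "card (states T') < p"
    using assms(5) by auto
  have "oblivious_transducer p (transducer_comp T T')"
    using assms(1) T T' by (intro oblivious_transducer_comp) (auto simp: transducer_for_def)
  then show ?thesis
    unfolding oblivious_def using transducer_for_comp[OF T(1) T'(1)] by blast
qed

end
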